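(* Let $c>0$, $\sigma_j=j^{-c}$, $j\ge1$, and $\mathcal{K}(\sigma)=\{\sigma_je_j\}_{j=1}^\infty\cup\{0\}\subset c_0$. Then $\tilde\varepsilon_n(\mathcal{K}(\sigma))_{c_0}\asymp2^{-cn}$, and for every $\gamma>2$ there is $n_1$, depending only on $\gamma$ and $c$, such that $d_n^\gamma(\mathcal{K}(\sigma))_{c_0}=0$ for all $n\ge n_1$.
   Context: $c_0$ denotes the Banach space of real sequences converging to $0$ with the norm $\|x\|=\sup_j|x_j|$, and $(e_j)$ is its standard unit vector basis. $a_n\asymp b_n$ means there are constants $0<c'\le C'$ independent of $n$ with $c'b_n\le a_n\le C'b_n$. The inner entropy number $\tilde\varepsilon_n(\mathcal{K})_{c_0}$ is the infimum of all $\varepsilon>0$ such that $\mathcal{K}$ is covered by $2^n$ closed balls of radius $\varepsilon$ with centers in $\mathcal{K}$. For $k\ge1$ and a norm $\|\cdot\|_{Y_k}$ on $\mathbb{R}^k$ let $B_{Y_k}=\{y\in\mathbb{R}^k:\|y\|_{Y_k}\le1\}$; $d^\gamma(\mathcal{K},Y_k)_{c_0}=\inf_{\Phi}\sup_{f\in\mathcal{K}}\inf_{y\in B_{Y_k}}\|f-\Phi(y)\|$, the infimum over all maps $\Phi:B_{Y_k}\to c_0$ with $\|\Phi(y)-\Phi(y')\|\le\gamma\|y-y'\|_{Y_k}$; and $d_n^\gamma(\mathcal{K})_{c_0}=\inf_{1\le k\le n}\inf_{\|\cdot\|_{Y_k}}d^\gamma(\mathcal{K},Y_k)_{c_0}$,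 the inner infimum over all norms on $\mathbb{R}^k$. *)

theory Defs
  imports "HOL-Analysis.Analysis"
begin

text \<open>The space c_0: real sequences indexed by the positive integers j \<ge> 1,
  represented as functions nat \<Rightarrow> real whose unused coordinate 0 is zero,
  converging to 0, with the sup norm.\<close>

definition c0 :: "(nat \<Rightarrow> real) set" where
  "c0 = {x. x 0 = 0 \<and> x \<longlonglongrightarrow> 0}"

definition c0_norm :: "(nat \<Rightarrow> real) \<Rightarrow> real" where
  "c0_norm x = (SUP j. \<bar>x j\<bar>)"

definition c0_dist :: "(nat \<Rightarrow> real) \<Rightarrow> (nat \<Rightarrow> real) \<Rightarrow> real" where
  "c0_dist x y = c0_norm (\<lambda>j. x j - y j)"

definition unit_vec :: "nat \<Rightarrow> nat \<Rightarrow> real" where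
  "unit_vec j = (\<lambda>i. if i = j then 1 else 0)"

definition Kset :: "(nat \<Rightarrow> real) \<Rightarrow> (nat \<Rightarrow> real) set" where
  "Kset \<sigma> = {(\<lambda>i. \<sigma> j * unit_vec j i) | j. j \<ge> 1} \<union> {(\<lambda>i. 0)}"

definition inner_entropy :: "nat \<Rightarrow> (nat \<Rightarrow> real) set \<Rightarrow> real" where
  "inner_entropy n K = Inf {\<epsilon>. \<epsilon> > 0 \<and> (\<exists>C. C \<subseteq> K \<and> finite C \<and> card C \<le> 2 ^ n \<and>
        (\<forall>f\<in>K. \<exists>c\<in>C. c0_dist f c \<le> \<epsilon>))}"

text \<open>R^k is represented as the vectors y :: nat \<Rightarrow> real with y i = 0 for i \<ge> k.\<close>
definition Rk :: "nat \<Rightarrow> (nat \<Rightarrow> real) set" where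
  "Rk k = {y. \<forall>i\<ge>k. y i = 0}"

definition is_norm_on_Rk :: "nat \<Rightarrow> ((nat \<Rightarrow> real) \<Rightarrow> real) \<Rightarrow> bool" where
  "is_norm_on_Rk k N \<longleftrightarrow>
     (\<forall>x\<in>Rk k. N x \<ge> 0) \<and>
     (\<forall>x\<in>Rk k. N x = 0 \<longleftrightarrow> x = (\<lambda>i. 0)) \<and>
     (\<forall>x\<in>Rk k. \<forall>a::real. N (\<lambda>i. a * x i) = \<bar>a\<bar> * N x) \<and>
     (\<forall>x\<in>Rk k. \<forall>y\<in>Rk k. N (\<lambda>i. x i + y i) \<le> N x + N y)"

definition unit_ball_Rk :: "nat \<Rightarrow> ((nat \<Rightarrow> real) \<Rightarrow> real) \<Rightarrow> (nat \<Rightarrow> real) set" where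
  "unit_ball_Rk k N = {y \<in> Rk k. N y \<le> 1}"

definition lip_width_k ::
  "real \<Rightarrow> (nat \<Rightarrow> real) set \<Rightarrow> nat \<Rightarrow> ((nat \<Rightarrow> real) \<Rightarrow> real) \<Rightarrow> real" where
  "lip_width_k \<gamma> K k N = Inf {(SUP f\<in>K. INF y\<in>unit_ball_Rk k N. c0_dist f (\<Phi> y)) | \<Phi>.
      (\<forall>y\<in>unit_ball_Rk k N. \<Phi> y \<in> c0) \<and>
      (\<forall>y\<in>unit_ball_Rk k N. \<forall>y'\<in>unit_ball_Rk k N.
          c0_dist (\<Phi> y) (\<Phi> y') \<le> \<gamma> * N (\<lambda>i. y i - y' i))}"

definition lip_width :: "real \<Rightarrow> nat \<Rightarrow> (nat \<Rightarrow> real) set \<Rightarrow> real" where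
  "lip_width \<gamma> n K = Inf {lip_width_k \<gamma> K k N | k N. 1 \<le> k \<and> k \<le> n \<and> is_norm_on_Rk k N}"

end

theory Submission
  imports Defs
begin

text \<open>
  Entropy: for positive nonincreasing weights, the centres 0 and sigma_j e_j with j < 2^n cover
  K(sigma) within sigma_(2^n), while every other point of K(sigma) lies at distance at least
  sigma_j from sigma_j e_j. Hence 2^n centres miss one of sigma_1 e_1, ..., sigma_(2^n+1) e_(2^n+1)
  and the covering radius is at least sigma_(2^n+1). For sigma_j = j^(-c) both bounds are
  comparable to 2^(-cn).

  Lipschitz widths: take q >= 1/c and give every j >= 1 an anchor Y_j in the unit ball of the max
  norm on R^(2q+1). If 2^(qL) <= j < 2^(q(L+1)), the first coordinate of Y_j is 2^(-L) and the
  other 2q coordinates place j injectively on the grid 2^(-L) {0..2^L}^(2q), which has at least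
  2^(q(L+1)) points. Then sigma_i <= 2^(-L_i) <= 2 ||Y_j - Y_i|| for i ~= j, so for gamma >= 2
  the gamma-Lipschitz map Phi(y)_i = max 0 (sigma_i - gamma ||y - Y_i||) sends Y_j exactly to
  sigma_j e_j, and 0 is the limit of these images.
\<close>

lemma abs_le_c0_dist:
  assumes "\<And>i. \<bar>x i\<bar> \<le> A" "\<And>i. \<bar>y i\<bar> \<le> B"
  shows "\<bar>x i - y i\<bar> \<le> c0_dist x y"
proof -
  have "bdd_above (range (\<lambda>j. \<bar>x j - y j\<bar>))"
    by (rule bdd_aboveI2[of _ _ "A + B"]) (metis abs_triangle_ineq4 add_mono order_trans assms)
  then show ?thesis unfolding c0_dist_def c0_norm_def by (rule cSUP_upper[OF UNIV_I])
qed

lemma c0_dist_nonneg: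
  assumes "\<And>i. \<bar>x i\<bar> \<le> A" "\<And>i. \<bar>y i\<bar> \<le> B"
  shows "0 \<le> c0_dist x y"
  using abs_le_c0_dist[of x A y B 0, OF assms] by linarith

lemma c0_dist_le:
  assumes "\<And>i. \<bar>x i - y i\<bar> \<le> A"
  shows "c0_dist x y \<le> A"
  unfolding c0_dist_def c0_norm_def by (rule cSUP_least) (use assms in auto)

lemma c0_dist_self [simp]: "c0_dist x x = 0"
  unfolding c0_dist_def c0_norm_def by simp

lemma c0_bounded:
  assumes "x \<in> c0"
  obtains M where "\<And>i. \<bar>x i\<bar> \<le> M"
proof -
  have "Bseq x" using assms unfolding c0_def by (auto intro: convergent_imp_Bseq convergentI)
  then obtain M where "\<forall>i. norm (x i) \<le> M" by (auto elim: BseqE)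
  then show ?thesis using that by auto
qed

definition scaled_unit :: "(nat \<Rightarrow> real) \<Rightarrow> nat \<Rightarrow> nat \<Rightarrow> real" where
  "scaled_unit \<sigma> j = (\<lambda>i. \<sigma> j * unit_vec j i)"

lemma scaled_unit_apply: "scaled_unit \<sigma> j i = (if i = j then \<sigma> j else 0)"
  by (simp add: scaled_unit_def unit_vec_def)

lemma Kset_eq: "Kset \<sigma> = scaled_unit \<sigma> ` {1..} \<union> {\<lambda>i. 0}"
  unfolding Kset_def scaled_unit_def by auto

lemma Kset_bounded:
  assumes "\<And>j. 1 \<le> j \<Longrightarrow> \<bar>\<sigma> j\<bar> \<le> M" "0 \<le> M" "f \<in> Kset \<sigma>"
  shows "\<bar>f i\<bar> \<le> M"
  using assms unfolding Kset_eq by (auto simp: scaled_unit_apply)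

section \<open>Inner entropy numbers\<close>

locale decreasing_weights =
  fixes \<sigma> :: "nat \<Rightarrow> real"
  assumes weight_pos: "1 \<le> j \<Longrightarrow> 0 < \<sigma> j"
    and weight_antitone: "1 \<le> i \<Longrightarrow> i \<le> j \<Longrightarrow> \<sigma> j \<le> \<sigma> i"
begin

lemma Kset_bounded_by_first: "f \<in> Kset \<sigma> \<Longrightarrow> \<bar>f i\<bar> \<le> \<sigma> 1"
  by (rule Kset_bounded) (use weight_pos weight_antitone in \<open>auto simp: less_imp_le\<close>)

lemma c0_dist_scaled_unit_zero: "1 \<le> j \<Longrightarrow> c0_dist (scaled_unit \<sigma> j) (\<lambda>i. 0) \<le> \<sigma> j"
  by (rule c0_dist_le) (auto simp: scaled_unit_apply weight_pos less_imp_le)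

lemma scaled_unit_separated:
  assumes j: "1 \<le> j" and f: "f \<in> Kset \<sigma>" "f \<noteq> scaled_unit \<sigma> j"
  shows "\<sigma> j \<le> c0_dist (scaled_unit \<sigma> j) f"
proof -
  have "f j = 0" using f unfolding Kset_eq by (auto simp: scaled_unit_apply)
  then have "\<sigma> j = \<bar>scaled_unit \<sigma> j j - f j\<bar>"
    using weight_pos[OF j] by (simp add: scaled_unit_apply)
  also have "\<dots> \<le> c0_dist (scaled_unit \<sigma> j) f"
    using j f(1) by (intro abs_le_c0_dist[where A = "\<sigma> 1" and B = "\<sigma> 1"] Kset_bounded_by_first)
      (auto simp: Kset_eq)
  finally show ?thesis .
qed

lemma inj_on_scaled_unit: "inj_on (scaled_unit \<sigma>) {1..}"
proof (rule inj_onI, rule ccontr)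
  fix i j assume i: "i \<in> {1..}" and eq: "scaled_unit \<sigma> i = scaled_unit \<sigma> j" and "i \<noteq> j"
  then have "scaled_unit \<sigma> i i = 0" by (simp add: scaled_unit_apply)
  then show False using weight_pos[of i] i by (simp add: scaled_unit_apply)
qed

lemma Kset_covering_radius:
  "\<sigma> (2^n) \<in> {\<epsilon>. \<epsilon> > 0 \<and> (\<exists>C. C \<subseteq> Kset \<sigma> \<and> finite C \<and> card C \<le> 2 ^ n \<and>
        (\<forall>f\<in>Kset \<sigma>. \<exists>z\<in>C. c0_dist f z \<le> \<epsilon>))}"
proof -
  let ?C = "insert (\<lambda>i. 0) (scaled_unit \<sigma> ` {1..<2^n})"
  have "card (scaled_unit \<sigma> ` {1..<2^n}) \<le> 2^n - 1"
    using card_image_le[of "{1..<2^n}" "scaled_unit \<sigma>"] by simp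
  then have card: "card ?C \<le> 2^n" by (intro card_insert_le_m1) auto
  have "\<exists>z\<in>?C. c0_dist f z \<le> \<sigma> (2^n)" if "f \<in> Kset \<sigma>" for f
  proof -
    from that consider "f = (\<lambda>i. 0)" | j where "1 \<le> j" "f = scaled_unit \<sigma> j"
      unfolding Kset_eq by auto
    then show ?thesis
    proof cases
      case 1
      then show ?thesis using weight_pos[of "2^n"] by force
    next
      case (2 j)
      show ?thesis
      proof (cases "j < 2^n")
        case True
        then show ?thesis using 2 weight_pos[of "2^n"] by force
      next
        case False
        then have "\<sigma> j \<le> \<sigma> (2^n)" by (intro weight_antitone) auto
        then show ?thesis using c0_dist_scaled_unit_zero[OF 2(1)] 2(2) by force
      qed
    qed
  qed
  then show ?thesis using card weight_pos[of "2^n"] unfolding Kset_eq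
    by (intro CollectI conjI exI[of _ ?C]) auto
qed

lemma inner_entropy_le: "inner_entropy n (Kset \<sigma>) \<le> \<sigma> (2^n)"
  unfolding inner_entropy_def
  by (rule cInf_lower[OF Kset_covering_radius], rule bdd_belowI[of _ 0]) simp

lemma inner_entropy_ge: "\<sigma> (2^n + 1) \<le> inner_entropy n (Kset \<sigma>)"
  unfolding inner_entropy_def
proof (rule cInf_greatest)
  fix \<epsilon> assume "\<epsilon> \<in> {\<epsilon>. \<epsilon> > 0 \<and> (\<exists>C. C \<subseteq> Kset \<sigma> \<and> finite C \<and> card C \<le> 2 ^ n \<and>
        (\<forall>f\<in>Kset \<sigma>. \<exists>z\<in>C. c0_dist f z \<le> \<epsilon>))}"
  then obtain C where C: "C \<subseteq> Kset \<sigma>" "finite C" "card C \<le> 2 ^ n"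
    and cover: "\<forall>f\<in>Kset \<sigma>. \<exists>z\<in>C. c0_dist f z \<le> \<epsilon>" by blast
  let ?P = "scaled_unit \<sigma> ` {1..2^n+1}"
  have "card ?P = 2^n + 1"
    using card_image[OF inj_on_subset[OF inj_on_scaled_unit, of "{1..2^n+1}"]] by simp
  then have "\<not> ?P \<subseteq> C" using card_mono[OF C(2), of ?P] C(3) by linarith
  then obtain j where "j \<in> {1..2^n+1}" "scaled_unit \<sigma> j \<notin> C"
    by (meson image_subset_iff)
  then have j: "1 \<le> j" "j \<le> 2^n + 1" "scaled_unit \<sigma> j \<notin> C" by auto
  have "scaled_unit \<sigma> j \<in> Kset \<sigma>" using j(1) by (simp add: Kset_eq)
  then obtain z where z: "z \<in> C" "c0_dist (scaled_unit \<sigma> j) z \<le> \<epsilon>" using cover by blast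
  have "\<sigma> (2^n + 1) \<le> \<sigma> j" using j by (intro weight_antitone) auto
  also have "\<dots> \<le> c0_dist (scaled_unit \<sigma> j) z"
    using z j C(1) by (intro scaled_unit_separated) auto
  finally show "\<sigma> (2^n + 1) \<le> \<epsilon>" using z(2) by linarith
next
  show "{\<epsilon>. \<epsilon> > 0 \<and> (\<exists>C. C \<subseteq> Kset \<sigma> \<and> finite C \<and> card C \<le> 2 ^ n \<and>
        (\<forall>f\<in>Kset \<sigma>. \<exists>z\<in>C. c0_dist f z \<le> \<epsilon>))} \<noteq> {}"
    using Kset_covering_radius by (rule ex_in_conv[THEN iffD1, OF exI])
qed

end

section \<open>Lipschitz widths via bump maps\<close>

definition max_norm :: "nat \<Rightarrow> (nat \<Rightarrow> real) \<Rightarrow> real" where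
  "max_norm k y = Max ((\<lambda>i. \<bar>y i\<bar>) ` {..<k})"

lemma abs_le_max_norm: "i < k \<Longrightarrow> \<bar>y i\<bar> \<le> max_norm k y"
  unfolding max_norm_def by (rule Max_ge) auto

lemma max_norm_le: "1 \<le> k \<Longrightarrow> (\<And>i. i < k \<Longrightarrow> \<bar>y i\<bar> \<le> B) \<Longrightarrow> max_norm k y \<le> B"
  unfolding max_norm_def by (subst Max_le_iff) (auto simp: lessThan_empty_iff)

lemma max_norm_attained:
  assumes "1 \<le> k"
  obtains i where "i < k" "max_norm k y = \<bar>y i\<bar>"
proof -
  have "max_norm k y \<in> (\<lambda>i. \<bar>y i\<bar>) ` {..<k}"
    unfolding max_norm_def using assms by (intro Max_in) (auto simp: lessThan_empty_iff)
  then show ?thesis using that by blast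
qed

lemma max_norm_nonneg: "1 \<le> k \<Longrightarrow> 0 \<le> max_norm k y"
  using abs_le_max_norm[of 0 k y] by simp

lemma max_norm_zero: "1 \<le> k \<Longrightarrow> max_norm k (\<lambda>i. 0) = 0"
  using max_norm_le[of k "\<lambda>i. 0" 0] max_norm_nonneg[of k "\<lambda>i. 0"] by simp

lemma max_norm_triangle: "1 \<le> k \<Longrightarrow> max_norm k (\<lambda>i. x i + y i) \<le> max_norm k x + max_norm k y"
  by (rule max_norm_le) (auto intro: order_trans[OF abs_triangle_ineq] add_mono abs_le_max_norm)

lemma max_norm_scale:
  assumes "1 \<le> k"
  shows "max_norm k (\<lambda>i. a * x i) = \<bar>a\<bar> * max_norm k x"
proof (rule antisym)
  show "max_norm k (\<lambda>i. a * x i) \<le> \<bar>a\<bar> * max_norm k x"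
    using assms by (intro max_norm_le) (auto simp: abs_mult intro: mult_left_mono abs_le_max_norm)
  obtain i where "i < k" "max_norm k x = \<bar>x i\<bar>" by (rule max_norm_attained[OF assms])
  then show "\<bar>a\<bar> * max_norm k x \<le> max_norm k (\<lambda>i. a * x i)"
    using abs_le_max_norm[of i k "\<lambda>i. a * x i"] by (simp add: abs_mult)
qed

lemma max_norm_commute: "max_norm k (\<lambda>i. x i - y i) = max_norm k (\<lambda>i. y i - x i)"
  unfolding max_norm_def by (simp add: abs_minus_commute)

lemma abs_diff_max_norm_le:
  assumes "1 \<le> k"
  shows "\<bar>max_norm k x - max_norm k y\<bar> \<le> max_norm k (\<lambda>i. x i - y i)"
  using max_norm_triangle[OF assms, of "\<lambda>i. x i - y i" y]
    max_norm_triangle[OF assms, of "\<lambda>i. y i - x i" x] max_norm_commute[of k x y]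
  by simp

lemma is_norm_on_Rk_max_norm:
  assumes k: "1 \<le> k"
  shows "is_norm_on_Rk k (max_norm k)"
  unfolding is_norm_on_Rk_def
proof (intro conjI ballI allI)
  fix x assume x: "x \<in> Rk k"
  show "0 \<le> max_norm k x" by (rule max_norm_nonneg[OF k])
  show "max_norm k x = 0 \<longleftrightarrow> x = (\<lambda>i. 0)"
  proof
    assume "max_norm k x = 0"
    then have "x i = 0" for i
      using abs_le_max_norm[of i k x] x by (cases "i < k") (auto simp: Rk_def)
    then show "x = (\<lambda>i. 0)" by auto
  qed (simp add: max_norm_zero[OF k])
  show "max_norm k (\<lambda>i. a * x i) = \<bar>a\<bar> * max_norm k x" for a by (rule max_norm_scale[OF k])
  show "max_norm k (\<lambda>i. x i + y i) \<le> max_norm k x + max_norm k y" for y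
    by (rule max_norm_triangle[OF k])
qed

definition bump_map ::
  "(nat \<Rightarrow> real) \<Rightarrow> real \<Rightarrow> nat \<Rightarrow> (nat \<Rightarrow> nat \<Rightarrow> real) \<Rightarrow> (nat \<Rightarrow> real) \<Rightarrow> nat \<Rightarrow> real" where
  "bump_map \<sigma> \<gamma> k Y y = (\<lambda>i. if i = 0 then 0 else max 0 (\<sigma> i - \<gamma> * max_norm k (\<lambda>t. y t - Y i t)))"

lemma bump_map_bounds:
  assumes "0 \<le> \<gamma>" "1 \<le> k" "0 \<le> \<sigma> i"
  shows "0 \<le> bump_map \<sigma> \<gamma> k Y y i" "bump_map \<sigma> \<gamma> k Y y i \<le> \<sigma> i"
  using assms max_norm_nonneg[OF assms(2)] by (auto simp: bump_map_def)

lemma bump_map_in_c0: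
  assumes "0 \<le> \<gamma>" "1 \<le> k" "\<And>i. 0 \<le> \<sigma> i" "\<sigma> \<longlonglongrightarrow> 0"
  shows "bump_map \<sigma> \<gamma> k Y y \<in> c0"
  unfolding c0_def
proof (intro CollectI conjI)
  show "bump_map \<sigma> \<gamma> k Y y 0 = 0" by (simp add: bump_map_def)
  show "bump_map \<sigma> \<gamma> k Y y \<longlonglongrightarrow> 0"
    by (rule tendsto_sandwich[of "\<lambda>_. 0" _ _ \<sigma>]) (use assms bump_map_bounds in auto)
qed

lemma abs_max_0_diff_le: "\<bar>max 0 a - max 0 b\<bar> \<le> \<bar>a - b\<bar>" for a b :: real
  by (simp add: max_def abs_if)

lemma bump_map_lipschitz:
  assumes \<gamma>: "0 \<le> \<gamma>" and k: "1 \<le> k"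
  shows "c0_dist (bump_map \<sigma> \<gamma> k Y y) (bump_map \<sigma> \<gamma> k Y y') \<le> \<gamma> * max_norm k (\<lambda>i. y i - y' i)"
proof (rule c0_dist_le)
  fix i
  let ?A = "max_norm k (\<lambda>t. y t - Y i t)" and ?B = "max_norm k (\<lambda>t. y' t - Y i t)"
  have "\<bar>?A - ?B\<bar> \<le> max_norm k (\<lambda>t. (y t - Y i t) - (y' t - Y i t))"
    by (rule abs_diff_max_norm_le[OF k])
  then have "\<bar>?A - ?B\<bar> \<le> max_norm k (\<lambda>t. y t - y' t)" by simp
  then have "\<gamma> * \<bar>?A - ?B\<bar> \<le> \<gamma> * max_norm k (\<lambda>t. y t - y' t)" by (rule mult_left_mono[OF _ \<gamma>])
  moreover have "\<bar>max 0 (\<sigma> i - \<gamma> * ?A) - max 0 (\<sigma> i - \<gamma> * ?B)\<bar> \<le> \<gamma> * \<bar>?A - ?B\<bar>"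
    using abs_max_0_diff_le[of "\<sigma> i - \<gamma> * ?A" "\<sigma> i - \<gamma> * ?B"] \<gamma>
    by (simp add: abs_mult right_diff_distrib[symmetric] abs_minus_commute)
  ultimately show "\<bar>bump_map \<sigma> \<gamma> k Y y i - bump_map \<sigma> \<gamma> k Y y' i\<bar>
      \<le> \<gamma> * max_norm k (\<lambda>t. y t - y' t)"
    using \<gamma> max_norm_nonneg[OF k] by (auto simp: bump_map_def)
qed

lemma zero_in_unit_ball_Rk:
  assumes "is_norm_on_Rk k N"
  shows "(\<lambda>i. 0) \<in> unit_ball_Rk k N"
proof -
  have "N (\<lambda>i. 0) = 0" using assms unfolding is_norm_on_Rk_def Rk_def by auto
  then show ?thesis by (simp add: unit_ball_Rk_def Rk_def)
qed

text \<open>The boundedness hypotheses are essential: c0_dist is a supremum of reals and carries no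
  information for unbounded sequences.\<close>

lemma approximation_error_nonneg:
  assumes f0: "f0 \<in> K" and K_bounded: "\<And>f i. f \<in> K \<Longrightarrow> \<bar>f i\<bar> \<le> M"
    and y0: "y0 \<in> B" and \<Phi>: "\<And>y. y \<in> B \<Longrightarrow> \<Phi> y \<in> c0"
  shows "0 \<le> (SUP f\<in>K. INF y\<in>B. c0_dist f (\<Phi> y))"
proof -
  have dist_nonneg: "0 \<le> c0_dist f (\<Phi> y)" if "f \<in> K" "y \<in> B" for f y
  proof -
    obtain M' where "\<And>i. \<bar>\<Phi> y i\<bar> \<le> M'" using c0_bounded \<Phi> \<open>y \<in> B\<close> by blast
    then show ?thesis using K_bounded[OF \<open>f \<in> K\<close>] by (intro c0_dist_nonneg)
  qed
  obtain M0 where M0: "\<And>i. \<bar>\<Phi> y0 i\<bar> \<le> M0" using c0_bounded \<Phi> y0 by blast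
  have inf_nonneg: "0 \<le> (INF y\<in>B. c0_dist f (\<Phi> y))" if "f \<in> K" for f
    using y0 dist_nonneg that by (intro cINF_greatest) auto
  have inf_bounded: "(INF y\<in>B. c0_dist f (\<Phi> y)) \<le> M + M0" if "f \<in> K" for f
  proof -
    have "(INF y\<in>B. c0_dist f (\<Phi> y)) \<le> c0_dist f (\<Phi> y0)"
      using y0 dist_nonneg that by (intro cINF_lower bdd_belowI2[where m = 0]) auto
    also have "\<dots> \<le> M + M0"
      by (rule c0_dist_le) (metis abs_triangle_ineq4 add_mono K_bounded[OF that] M0 order_trans)
    finally show ?thesis .
  qed
  show ?thesis
    using f0 inf_nonneg inf_bounded
    by (intro cSUP_upper2[where x = f0]) (auto intro: bdd_aboveI2[where M = "M + M0"])
qed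

lemma lip_width_k_nonneg:
  assumes \<gamma>: "0 \<le> \<gamma>" and N: "is_norm_on_Rk k N"
    and f0: "f0 \<in> K" and K_bounded: "\<And>f i. f \<in> K \<Longrightarrow> \<bar>f i\<bar> \<le> M"
  shows "0 \<le> lip_width_k \<gamma> K k N"
  unfolding lip_width_k_def
proof (rule cInf_greatest)
  let ?B = "unit_ball_Rk k N"
  define zero_map :: "(nat \<Rightarrow> real) \<Rightarrow> nat \<Rightarrow> real" where "zero_map = (\<lambda>y i. 0)"
  have "0 \<le> N (\<lambda>i. y i - y' i)" if "y \<in> ?B" "y' \<in> ?B" for y y'
    using N that unfolding is_norm_on_Rk_def unit_ball_Rk_def Rk_def by auto
  then have "\<forall>y\<in>?B. \<forall>y'\<in>?B. c0_dist (zero_map y) (zero_map y') \<le> \<gamma> * N (\<lambda>i. y i - y' i)"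
    using \<gamma> by (simp add: zero_map_def)
  moreover have "\<forall>y\<in>?B. zero_map y \<in> c0" by (simp add: zero_map_def c0_def)
  ultimately show "{(SUP f\<in>K. INF y\<in>?B. c0_dist f (\<Phi> y)) | \<Phi>. (\<forall>y\<in>?B. \<Phi> y \<in> c0) \<and>
      (\<forall>y\<in>?B. \<forall>y'\<in>?B. c0_dist (\<Phi> y) (\<Phi> y') \<le> \<gamma> * N (\<lambda>i. y i - y' i))} \<noteq> {}"
    by (intro ex_in_conv[THEN iffD1] exI CollectI exI[of _ zero_map] conjI) simp_all
next
  fix x assume "x \<in> {(SUP f\<in>K. INF y\<in>unit_ball_Rk k N. c0_dist f (\<Phi> y)) | \<Phi>.
      (\<forall>y\<in>unit_ball_Rk k N. \<Phi> y \<in> c0) \<and> (\<forall>y\<in>unit_ball_Rk k N. \<forall>y'\<in>unit_ball_Rk k N.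
          c0_dist (\<Phi> y) (\<Phi> y') \<le> \<gamma> * N (\<lambda>i. y i - y' i))}"
  then obtain \<Phi> where x: "x = (SUP f\<in>K. INF y\<in>unit_ball_Rk k N. c0_dist f (\<Phi> y))"
    and \<Phi>: "\<forall>y\<in>unit_ball_Rk k N. \<Phi> y \<in> c0" by blast
  show "0 \<le> x" unfolding x
    by (rule approximation_error_nonneg[OF f0 _ zero_in_unit_ball_Rk[OF N]])
      (use K_bounded \<Phi> in auto)
qed

lemma lip_width_k_eq_0I:
  assumes f0: "f0 \<in> K" and K_bounded: "\<And>f i. f \<in> K \<Longrightarrow> \<bar>f i\<bar> \<le> M"
    and y0: "y0 \<in> unit_ball_Rk k N"
    and \<Phi>_c0: "\<forall>y\<in>unit_ball_Rk k N. \<Phi> y \<in> c0"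
    and \<Phi>_lipschitz: "\<forall>y\<in>unit_ball_Rk k N. \<forall>y'\<in>unit_ball_Rk k N.
      c0_dist (\<Phi> y) (\<Phi> y') \<le> \<gamma> * N (\<lambda>i. y i - y' i)"
    and \<Phi>_approximates: "\<And>f. f \<in> K \<Longrightarrow> (INF y\<in>unit_ball_Rk k N. c0_dist f (\<Phi> y)) \<le> 0"
  shows "lip_width_k \<gamma> K k N = 0"
proof -
  let ?B = "unit_ball_Rk k N"
  have error_nonneg: "0 \<le> (SUP f\<in>K. INF y\<in>?B. c0_dist f (\<Psi> y))" if "\<forall>y\<in>?B. \<Psi> y \<in> c0" for \<Psi>
    by (rule approximation_error_nonneg[OF f0 _ y0]) (use K_bounded that in auto)
  have "(SUP f\<in>K. INF y\<in>?B. c0_dist f (\<Phi> y)) = 0"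
    using f0 \<Phi>_approximates error_nonneg[OF \<Phi>_c0] by (intro antisym cSUP_least) auto
  then show ?thesis
    unfolding lip_width_k_def
  proof (intro cInf_eq_minimum)
    assume "(SUP f\<in>K. INF y\<in>?B. c0_dist f (\<Phi> y)) = 0"
    then show "0 \<in> {(SUP f\<in>K. INF y\<in>?B. c0_dist f (\<Psi> y)) | \<Psi>. (\<forall>y\<in>?B. \<Psi> y \<in> c0) \<and>
        (\<forall>y\<in>?B. \<forall>y'\<in>?B. c0_dist (\<Psi> y) (\<Psi> y') \<le> \<gamma> * N (\<lambda>i. y i - y' i))}"
      using \<Phi>_c0 \<Phi>_lipschitz by (intro CollectI exI[of _ \<Phi>] conjI) auto
  qed (use error_nonneg in blast)
qed

locale separated_anchors =
  fixes \<sigma> :: "nat \<Rightarrow> real" and \<gamma> :: real and k :: nat and Y :: "nat \<Rightarrow> nat \<Rightarrow> real"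
  assumes dim_pos: "1 \<le> k" and \<gamma>_nonneg: "0 \<le> \<gamma>"
    and \<sigma>_nonneg: "0 \<le> \<sigma> i" and \<sigma>_lim: "\<sigma> \<longlonglongrightarrow> 0"
    and Y_in_ball: "1 \<le> j \<Longrightarrow> Y j \<in> unit_ball_Rk k (max_norm k)"
    and Y_separated: "1 \<le> i \<Longrightarrow> 1 \<le> j \<Longrightarrow> i \<noteq> j \<Longrightarrow>
      \<sigma> i \<le> \<gamma> * max_norm k (\<lambda>t. Y j t - Y i t)"
begin

lemma bump_map_at_anchor: "1 \<le> j \<Longrightarrow> bump_map \<sigma> \<gamma> k Y (Y j) = scaled_unit \<sigma> j"
  using \<sigma>_nonneg Y_separated by (auto simp: bump_map_def scaled_unit_apply max_norm_zero[OF dim_pos])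

lemma uniformly_bounded:
  "\<exists>M. (\<forall>f\<in>Kset \<sigma>. \<forall>i. \<bar>f i\<bar> \<le> M) \<and> (\<forall>y i. \<bar>bump_map \<sigma> \<gamma> k Y y i\<bar> \<le> M)"
proof -
  have "Bseq \<sigma>" using convergent_imp_Bseq convergentI \<sigma>_lim by blast
  then obtain M where "\<forall>i. norm (\<sigma> i) \<le> M" by (auto elim: BseqE)
  then have M: "\<And>i. \<bar>\<sigma> i\<bar> \<le> M" by simp
  then have "0 \<le> M" by (meson abs_ge_zero order_trans)
  have "\<bar>f i\<bar> \<le> M" if "f \<in> Kset \<sigma>" for f i
    by (rule Kset_bounded[OF _ \<open>0 \<le> M\<close> that]) (rule M)
  moreover have "\<bar>bump_map \<sigma> \<gamma> k Y y i\<bar> \<le> M" for y i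
  proof -
    have "0 \<le> bump_map \<sigma> \<gamma> k Y y i" "bump_map \<sigma> \<gamma> k Y y i \<le> \<sigma> i"
      by (rule bump_map_bounds[OF \<gamma>_nonneg dim_pos \<sigma>_nonneg])+
    then show ?thesis using abs_le_D1[OF M[of i]] by linarith
  qed
  ultimately show ?thesis by blast
qed

lemma bump_map_approximates_Kset:
  assumes f: "f \<in> Kset \<sigma>"
  shows "(INF y\<in>unit_ball_Rk k (max_norm k). c0_dist f (bump_map \<sigma> \<gamma> k Y y)) \<le> 0"
proof -
  let ?B = "unit_ball_Rk k (max_norm k)" and ?\<Phi> = "bump_map \<sigma> \<gamma> k Y"
  obtain M where "\<forall>i. \<bar>f i\<bar> \<le> M" and "\<forall>y i. \<bar>?\<Phi> y i\<bar> \<le> M"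
    using uniformly_bounded f by blast
  then have dist_nonneg: "0 \<le> c0_dist f (?\<Phi> y)" for y by (intro c0_dist_nonneg) auto
  have inf_le: "(INF y\<in>?B. c0_dist f (?\<Phi> y)) \<le> c0_dist f (scaled_unit \<sigma> j)" if j: "1 \<le> j" for j
  proof -
    have "(INF y\<in>?B. c0_dist f (?\<Phi> y)) \<le> c0_dist f (?\<Phi> (Y j))"
      by (rule cINF_lower[OF bdd_belowI2[where m = 0] Y_in_ball[OF j]]) (rule dist_nonneg)
    then show ?thesis by (simp only: bump_map_at_anchor[OF j])
  qed
  from f consider "f = (\<lambda>i. 0)" | j where "1 \<le> j" "f = scaled_unit \<sigma> j"
    unfolding Kset_eq by auto
  then show ?thesis
  proof cases
    case 1
    have "(INF y\<in>?B. c0_dist f (?\<Phi> y)) \<le> \<sigma> j" if j: "1 \<le> j" for j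
    proof -
      have "c0_dist f (scaled_unit \<sigma> j) \<le> \<sigma> j"
        unfolding 1 by (rule c0_dist_le) (simp add: scaled_unit_apply \<sigma>_nonneg)
      then show ?thesis using inf_le[OF j] by linarith
    qed
    then show ?thesis by (intro LIMSEQ_le_const[OF \<sigma>_lim] exI[of _ 1]) simp
  next
    case (2 j)
    then show ?thesis using inf_le[OF 2(1)] by simp
  qed
qed

lemma lip_width_k_Kset_eq_0: "lip_width_k \<gamma> (Kset \<sigma>) k (max_norm k) = 0"
proof -
  obtain M where M: "\<forall>f\<in>Kset \<sigma>. \<forall>i. \<bar>f i\<bar> \<le> M" using uniformly_bounded by blast
  show ?thesis
  proof (rule lip_width_k_eq_0I[of "\<lambda>i. 0" _ M "Y 1" _ _ "bump_map \<sigma> \<gamma> k Y"])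
    show "(\<lambda>i. 0) \<in> Kset \<sigma>" by (simp add: Kset_def)
    show "\<And>f i. f \<in> Kset \<sigma> \<Longrightarrow> \<bar>f i\<bar> \<le> M" using M by blast
    show "Y 1 \<in> unit_ball_Rk k (max_norm k)" by (rule Y_in_ball) simp
    show "\<forall>y\<in>unit_ball_Rk k (max_norm k). bump_map \<sigma> \<gamma> k Y y \<in> c0"
      using bump_map_in_c0[OF \<gamma>_nonneg dim_pos \<sigma>_nonneg \<sigma>_lim] by blast
    show "\<forall>y\<in>unit_ball_Rk k (max_norm k). \<forall>y'\<in>unit_ball_Rk k (max_norm k).
        c0_dist (bump_map \<sigma> \<gamma> k Y y) (bump_map \<sigma> \<gamma> k Y y') \<le> \<gamma> * max_norm k (\<lambda>i. y i - y' i)"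
      using bump_map_lipschitz[OF \<gamma>_nonneg dim_pos] by blast
  qed (rule bump_map_approximates_Kset)
qed

end

lemma lip_width_eq_0I:
  assumes \<gamma>: "0 \<le> \<gamma>" and f0: "f0 \<in> K" and K_bounded: "\<And>f i. f \<in> K \<Longrightarrow> \<bar>f i\<bar> \<le> M"
    and k: "1 \<le> k" "k \<le> n" and N: "is_norm_on_Rk k N" and width: "lip_width_k \<gamma> K k N = 0"
  shows "lip_width \<gamma> n K = 0"
  unfolding lip_width_def
proof (rule cInf_eq_minimum)
  show "0 \<in> {lip_width_k \<gamma> K k N | k N. 1 \<le> k \<and> k \<le> n \<and> is_norm_on_Rk k N}"
    using k N width by (intro CollectI exI[of _ k] exI[of _ N]) simp
next
  fix x assume "x \<in> {lip_width_k \<gamma> K k N | k N. 1 \<le> k \<and> k \<le> n \<and> is_norm_on_Rk k N}"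
  then obtain k' N' where x: "x = lip_width_k \<gamma> K k' N'" and N': "is_norm_on_Rk k' N'" by blast
  show "0 \<le> x" unfolding x by (rule lip_width_k_nonneg[OF \<gamma> N' f0]) (rule K_bounded)
qed

section \<open>Anchors for polynomially decaying weights\<close>

definition level :: "nat \<Rightarrow> nat \<Rightarrow> nat" where
  "level q j = (LEAST L. j < 2 ^ (q * Suc L))"

definition level_set :: "nat \<Rightarrow> nat \<Rightarrow> nat set" where
  "level_set q L = {j. 2 ^ (q * L) \<le> j \<and> j < 2 ^ (q * Suc L)}"

definition grid :: "nat \<Rightarrow> nat \<Rightarrow> (nat \<Rightarrow> nat) set" where
  "grid d L = PiE {1..d} (\<lambda>_. {0..2 ^ L})"

definition grid_code :: "nat \<Rightarrow> nat \<Rightarrow> nat \<Rightarrow> nat \<Rightarrow> nat" where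
  "grid_code q L = (SOME g. inj_on g (level_set q L) \<and> g ` level_set q L \<subseteq> grid (2 * q) L)"

definition anchor :: "nat \<Rightarrow> nat \<Rightarrow> nat \<Rightarrow> real" where
  "anchor q j = (\<lambda>i. if i = 0 then (1/2) ^ level q j
     else if i \<le> 2 * q then real (grid_code q (level q j) j i) / 2 ^ level q j else 0)"

lemma in_level_set_level:
  assumes q: "1 \<le> q" and j: "1 \<le> j"
  shows "j \<in> level_set q (level q j)"
proof -
  have "j < 2 ^ j" by (rule less_exp)
  also have "\<dots> \<le> 2 ^ (q * Suc j)"
    using q mult_le_mono1[of 1 q "Suc j"] by (intro power_increasing) auto
  finally have upper: "j < 2 ^ (q * Suc (level q j))"
    unfolding level_def by (rule LeastI)
  have lower: "2 ^ (q * level q j) \<le> j"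
  proof (cases "level q j")
    case (Suc L)
    then have "\<not> j < 2 ^ (q * Suc L)"
      using Least_le[of "\<lambda>L. j < 2 ^ (q * Suc L)" L] unfolding level_def by fastforce
    then show ?thesis using Suc by simp
  qed (use j in simp)
  show ?thesis using upper lower unfolding level_set_def by simp
qed

lemma card_level_set_le: "card (level_set q L) \<le> 2 ^ (q * Suc L)"
proof -
  have "card (level_set q L) \<le> card {..<(2::nat) ^ (q * Suc L)}"
    by (rule card_mono) (auto simp: level_set_def)
  also have "\<dots> = 2 ^ (q * Suc L)" by (rule card_lessThan)
  finally show ?thesis .
qed

lemma card_grid: "card (grid d L) = (2 ^ L + 1) ^ d"
  unfolding grid_def by (simp add: card_PiE)

lemma two_pow_le_card_grid: "(2::nat) ^ (q * Suc L) \<le> (2 ^ L + 1) ^ (2 * q)"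
proof -
  have "(2::nat) ^ (q * Suc L) = (2 ^ Suc L) ^ q" by (simp only: mult.commute[of q] power_mult)
  also have "\<dots> \<le> ((2 ^ L + 1) ^ 2) ^ q"
    by (rule power_mono) (simp_all add: power2_eq_square algebra_simps)
  also have "\<dots> = (2 ^ L + 1) ^ (2 * q)" by (simp add: power_mult)
  finally show ?thesis .
qed

lemma grid_code:
  "inj_on (grid_code q L) (level_set q L) \<and> grid_code q L ` level_set q L \<subseteq> grid (2 * q) L"
proof -
  have "finite (level_set q L)"
    by (rule finite_subset[of _ "{..<2 ^ (q * Suc L)}"]) (auto simp: level_set_def)
  moreover have "finite (grid (2 * q) L)" by (simp add: grid_def finite_PiE)
  moreover have "card (level_set q L) \<le> card (grid (2 * q) L)"
    unfolding card_grid by (rule order_trans[OF card_level_set_le two_pow_le_card_grid])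
  ultimately obtain g where "g ` level_set q L \<subseteq> grid (2 * q) L" "inj_on g (level_set q L)"
    using card_le_inj by blast
  then have "inj_on g (level_set q L) \<and> g ` level_set q L \<subseteq> grid (2 * q) L" by simp
  from someI[of "\<lambda>g. inj_on g (level_set q L) \<and> g ` level_set q L \<subseteq> grid (2 * q) L", OF this]
  show ?thesis unfolding grid_code_def .
qed

lemma anchor_in_unit_ball:
  assumes q: "1 \<le> q" and j: "1 \<le> j"
  shows "anchor q j \<in> unit_ball_Rk (2 * q + 1) (max_norm (2 * q + 1))"
  unfolding unit_ball_Rk_def
proof (intro CollectI conjI)
  show "anchor q j \<in> Rk (2 * q + 1)" by (simp add: Rk_def anchor_def)
  let ?L = "level q j"
  have "grid_code q ?L j \<in> grid (2 * q) ?L" using grid_code in_level_set_level[OF q j] by blast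
  then have "grid_code q ?L j i \<le> 2 ^ ?L" if "i \<in> {1..2 * q}" for i
    using that unfolding grid_def by (auto simp: PiE_iff)
  then have code_le: "real (grid_code q ?L j i) \<le> 2 ^ ?L" if "i \<in> {1..2 * q}" for i
    using of_nat_mono[of "grid_code q ?L j i" "2 ^ ?L"] that by simp
  show "max_norm (2 * q + 1) (anchor q j) \<le> 1"
  proof (rule max_norm_le)
    fix i assume "i < 2 * q + 1"
    then show "\<bar>anchor q j i\<bar> \<le> 1"
      using code_le[of i] by (auto simp: anchor_def power_le_one)
  qed simp
qed

lemma powr_le_half_pow_level:
  assumes q: "1 \<le> q" and j: "1 \<le> j"
  shows "real j powr (- 1 / q) \<le> (1/2) ^ level q j"
proof -
  let ?L = "level q j"
  have "2 ^ (q * ?L) \<le> j" using in_level_set_level[OF q j] unfolding level_set_def by simp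
  then have "real j powr (- 1 / q) \<le> real (2 ^ (q * ?L)) powr (- 1 / q)"
    by (intro powr_mono2') auto
  also have "real (2 ^ (q * ?L)) = 2 powr real (q * ?L)" by (subst powr_realpow) auto
  also have "(2 powr real (q * ?L)) powr (- 1 / q) = 2 powr (- real ?L)"
    using q by (simp add: powr_powr)
  also have "\<dots> = (1/2) ^ ?L" by (simp add: powr_minus powr_realpow power_one_over inverse_eq_divide)
  finally show ?thesis .
qed

lemma le_twice_abs_diff:
  fixes x y :: real
  assumes "0 \<le> x" and "2 * y \<le> x \<or> 2 * x \<le> y"
  shows "x \<le> 2 * \<bar>y - x\<bar>"
  using assms by (auto simp: abs_if)

lemma half_pow_le_twice_diff:
  fixes a b :: nat
  assumes "a \<noteq> b"
  shows "(1/2::real) ^ a \<le> 2 * \<bar>(1/2) ^ b - (1/2) ^ a\<bar>"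
proof (rule le_twice_abs_diff)
  consider "Suc a \<le> b" | "Suc b \<le> a" using assms by linarith
  then show "2 * (1/2::real) ^ b \<le> (1/2) ^ a \<or> 2 * (1/2::real) ^ a \<le> (1/2) ^ b"
  proof cases
    case 1
    then have "(1/2::real) ^ b \<le> (1/2) ^ Suc a" by (rule power_decreasing) simp_all
    then show ?thesis by simp
  next
    case 2
    then have "(1/2::real) ^ a \<le> (1/2) ^ Suc b" by (rule power_decreasing) simp_all
    then show ?thesis by simp
  qed
qed simp

lemma anchor_separated:
  assumes q: "1 \<le> q" and i: "1 \<le> i" and j: "1 \<le> j" and "i \<noteq> j"
  shows "(1/2) ^ level q i \<le> 2 * max_norm (2 * q + 1) (\<lambda>t. anchor q j t - anchor q i t)"
proof (cases "level q i = level q j")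
  case False
  have "(1/2) ^ level q i \<le> 2 * \<bar>anchor q j 0 - anchor q i 0\<bar>"
    using half_pow_le_twice_diff[OF False] by (simp add: anchor_def)
  also have "\<dots> \<le> 2 * max_norm (2 * q + 1) (\<lambda>t. anchor q j t - anchor q i t)"
    using abs_le_max_norm[of 0 "2 * q + 1" "\<lambda>t. anchor q j t - anchor q i t"] by simp
  finally show ?thesis .
next
  case True
  let ?L = "level q i" and ?g = "grid_code q (level q i)"
  have "i \<in> level_set q ?L" "j \<in> level_set q ?L"
    using in_level_set_level[OF q i] in_level_set_level[OF q j] True by auto
  then have "?g i \<noteq> ?g j" "?g i \<in> grid (2 * q) ?L" "?g j \<in> grid (2 * q) ?L"
    using grid_code[of q ?L] \<open>i \<noteq> j\<close> by (auto dest: inj_onD)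
  then obtain t where t: "t \<in> {1..2 * q}" "?g i t \<noteq> ?g j t"
    unfolding grid_def by (metis PiE_ext)
  have "(1/2::real) ^ ?L \<le> \<bar>real (?g j t) - real (?g i t)\<bar> / 2 ^ ?L"
    using t(2) by (simp add: power_one_over divide_right_mono)
  also have "\<dots> = \<bar>anchor q j t - anchor q i t\<bar>"
    using t(1) True by (simp add: anchor_def diff_divide_distrib[symmetric])
  also have "\<dots> \<le> max_norm (2 * q + 1) (\<lambda>t. anchor q j t - anchor q i t)"
    using t(1) by (intro abs_le_max_norm) auto
  finally show ?thesis
    using max_norm_nonneg[of "2 * q + 1" "\<lambda>t. anchor q j t - anchor q i t"] by linarith
qed

lemma lip_width_k_Kset_eq_0_if_decay:
  assumes q: "1 \<le> q" and \<gamma>: "2 \<le> \<gamma>"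
    and \<sigma>_nonneg: "\<And>i. 0 \<le> \<sigma> i" and \<sigma>_decay: "\<And>j. 1 \<le> j \<Longrightarrow> \<sigma> j \<le> real j powr (- 1 / q)"
  shows "lip_width_k \<gamma> (Kset \<sigma>) (2 * q + 1) (max_norm (2 * q + 1)) = 0"
proof -
  interpret separated_anchors \<sigma> \<gamma> "2 * q + 1" "anchor q"
  proof
    show "1 \<le> 2 * q + 1" and "0 \<le> \<gamma>" and "0 \<le> \<sigma> i" for i using \<gamma> \<sigma>_nonneg by simp_all
    show "\<sigma> \<longlonglongrightarrow> 0"
    proof (rule tendsto_sandwich[of "\<lambda>_. 0" _ _ "\<lambda>j. real j powr (- 1 / q)"])
      show "\<forall>\<^sub>F j in sequentially. 0 \<le> \<sigma> j" using \<sigma>_nonneg by simp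
      show "\<forall>\<^sub>F j in sequentially. \<sigma> j \<le> real j powr (- 1 / q)"
        using \<sigma>_decay by (intro eventually_sequentiallyI[of 1])
      show "(\<lambda>j. real j powr (- 1 / q)) \<longlonglongrightarrow> 0"
        using q by (intro tendsto_neg_powr filterlim_real_sequentially) simp
    qed simp
    show "anchor q j \<in> unit_ball_Rk (2 * q + 1) (max_norm (2 * q + 1))" if "1 \<le> j" for j
      using anchor_in_unit_ball[OF q that] .
    show "\<sigma> i \<le> \<gamma> * max_norm (2 * q + 1) (\<lambda>t. anchor q j t - anchor q i t)"
      if "1 \<le> i" "1 \<le> j" "i \<noteq> j" for i j
    proof -
      have "\<sigma> i \<le> (1/2) ^ level q i"
        using \<sigma>_decay[OF that(1)] powr_le_half_pow_level[OF q that(1)] by linarith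
      also have "\<dots> \<le> 2 * max_norm (2 * q + 1) (\<lambda>t. anchor q j t - anchor q i t)"
        by (rule anchor_separated[OF q that])
      also have "\<dots> \<le> \<gamma> * max_norm (2 * q + 1) (\<lambda>t. anchor q j t - anchor q i t)"
        using \<gamma> max_norm_nonneg[of "2 * q + 1"] by (intro mult_right_mono) auto
      finally show ?thesis .
    qed
  qed
  show ?thesis by (rule lip_width_k_Kset_eq_0)
qed

lemma two_pow_powr: "real (2 ^ n) powr (- c) = 2 powr (- c * real n)"
  by (simp add: powr_realpow[symmetric] powr_powr mult.commute)

section \<open>The weights j powr -c\<close>

lemma decreasing_weights_powr: "0 < c \<Longrightarrow> decreasing_weights (\<lambda>j. real j powr (- c))"
  by unfold_locales (simp_all add: powr_mono2')

lemma inner_entropy_Kset_powr: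
  assumes "0 < c"
  shows "2 powr (- c) * 2 powr (- c * real n) \<le> inner_entropy n (Kset (\<lambda>j. real j powr (- c)))"
    and "inner_entropy n (Kset (\<lambda>j. real j powr (- c))) \<le> 2 powr (- c * real n)"
proof -
  interpret decreasing_weights "\<lambda>j. real j powr (- c)"
    by (rule decreasing_weights_powr[OF assms])
  have "2 powr (- c) * 2 powr (- c * real n) = 2 powr (- c * real (Suc n))"
    by (simp add: powr_add[symmetric] algebra_simps)
  also have "\<dots> = real (2 ^ Suc n) powr (- c)" by (simp only: two_pow_powr)
  also have "\<dots> \<le> real (2 ^ n + 1) powr (- c)" using weight_antitone[of "2 ^ n + 1" "2 ^ Suc n"] by simp
  finally show "2 powr (- c) * 2 powr (- c * real n) \<le> inner_entropy n (Kset (\<lambda>j. real j powr (- c)))"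
    using inner_entropy_ge[of n] by linarith
  show "inner_entropy n (Kset (\<lambda>j. real j powr (- c))) \<le> 2 powr (- c * real n)"
    using inner_entropy_le[of n] by (simp only: two_pow_powr)
qed

lemma lip_width_Kset_powr_eventually_0:
  assumes c: "0 < c" and \<gamma>: "2 < \<gamma>"
  shows "\<exists>n1. \<forall>n\<ge>n1. lip_width \<gamma> n (Kset (\<lambda>j. real j powr (- c))) = 0"
proof -
  interpret decreasing_weights "\<lambda>j. real j powr (- c)"
    by (rule decreasing_weights_powr[OF c])
  obtain q :: nat where q: "1 / c < q" using reals_Archimedean2 by blast
  moreover have "0 < 1 / c" using c by simp
  ultimately have "0 < real q" by linarith
  then have "1 / real q < c" using q c by (simp add: field_simps)
  then have "real j powr (- c) \<le> real j powr (- 1 / q)" if "1 \<le> j" for j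
    using that by (intro powr_mono) simp_all
  then have "lip_width_k \<gamma> (Kset (\<lambda>j. real j powr (- c))) (2 * q + 1) (max_norm (2 * q + 1)) = 0"
    using \<open>0 < real q\<close> \<gamma> by (intro lip_width_k_Kset_eq_0_if_decay) simp_all
  then have "lip_width \<gamma> n (Kset (\<lambda>j. real j powr (- c))) = 0" if "2 * q + 1 \<le> n" for n
    using \<gamma> that Kset_bounded_by_first is_norm_on_Rk_max_norm[of "2 * q + 1"]
    by (intro lip_width_eq_0I[of \<gamma> "\<lambda>i. 0" _ "1 powr (- c)" "2 * q + 1"]) (simp_all add: Kset_def)
  then show ?thesis by blast
qed

theorem theorem4p11:
  fixes c :: real
  assumes "c > 0"
  defines "\<sigma> \<equiv> (\<lambda>j::nat. (real j) powr (- c))"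
  shows "(\<exists>c1 C1. 0 < c1 \<and> c1 \<le> C1 \<and>
            (\<forall>n::nat. c1 * 2 powr (- c * real n) \<le> inner_entropy n (Kset \<sigma>) \<and>
                      inner_entropy n (Kset \<sigma>) \<le> C1 * 2 powr (- c * real n)))
       \<and> (\<forall>\<gamma>::real. \<gamma> > 2 \<longrightarrow> (\<exists>n1::nat. \<forall>n\<ge>n1. lip_width \<gamma> n (Kset \<sigma>) = 0))"
proof -
  have "2 powr (- c) \<le> 2 powr 0" using \<open>c > 0\<close> by (intro powr_mono) simp_all
  then have "\<exists>c1 C1. 0 < c1 \<and> c1 \<le> C1 \<and>
      (\<forall>n. c1 * 2 powr (- c * real n) \<le> inner_entropy n (Kset \<sigma>) \<and>
           inner_entropy n (Kset \<sigma>) \<le> C1 * 2 powr (- c * real n))"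
    using inner_entropy_Kset_powr[OF \<open>c > 0\<close>] unfolding \<sigma>_def
    by (intro exI[of _ "2 powr (- c)"] exI[of _ 1]) simp
  then show ?thesis using lip_width_Kset_powr_eventually_0[OF \<open>c > 0\<close>] unfolding \<sigma>_def by blast
qed

end
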